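(* Denote by $a^+_{n,k}$, $a^-_{n,k}$ and $d^B_{n,k}$ the coefficient of $x^k$ in $f^+_n(x)$, $f^-_n(x)$ and $d^B_n(x)$, respectively. Then for all $n \ge 2$ and $k \ge 1$: $$ a^+_{n,k} = (2k-1)\, a^+_{n-1,k} + 2(n-k)\, a^+_{n-1,k-1} + 2(n-1)\, a^+_{n-2,k-1} + d^B_{n-1,k}, $$ $$ a^-_{n,k} = (2k-1)\, a^-_{n-1,k} + 2(n-k)\, a^-_{n-1,k-1} + 2(n-1)\, a^-_{n-2,k-1} + d^B_{n-1,k-1}. $$
   Context: A signed permutation of $[n]$ is a set $S = \{a_1, \dots, a_n\}$ with $a_i \in \{i, -i\}$, together with a bijection $w : S \to S$. - $a \in S$ is a $B$-excedance if $w(a) > a$, or if $a < 0$ and $w(a) = a$. - $w$ is a derangement if no $a \in S$ with $a > 0$ has $w(a) = a$. - $d^B_n(x) = \sum_{w \text{ derangement}} x^{\mathrm{exc}_B(w)}$, where $\mathrm{exc}_B(w)$ is the number of $B$-excedances, and $d^B_0 = 1$. - $f^+_n, f^-_n$ are the unique real polynomials with $d^B_n = f^+_n + f^-_n$, $f^+_n(x) = x^n f^+_n(1/x)$ and $f^-_n(x) = x^{n+1} f^-_n(1/x)$. *)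

theory Defs
  imports Complex_Main "HOL-Computational_Algebra.Polynomial"
begin

text \<open>A signed permutation of [n]: a set S = {a_1,...,a_n} with a_i in {i,-i},
  together with a bijection w : S -> S. The function w is normalised to be the
  identity outside S, so that each signed permutation has a unique representation.\<close>

definition signed_sets :: "nat \<Rightarrow> int set set" where
  "signed_sets n = {S. \<exists>\<sigma>::nat \<Rightarrow> int. (\<forall>i\<in>{1..n}. \<sigma> i = 1 \<or> \<sigma> i = -1)
                           \<and> S = (\<lambda>i. \<sigma> i * int i) ` {1..n}}"

definition signed_perms :: "nat \<Rightarrow> (int set \<times> (int \<Rightarrow> int)) set" where
  "signed_perms n = {(S, w). S \<in> signed_sets n \<and> bij_betw w S S \<and> (\<forall>x. x \<notin> S \<longrightarrow> w x = x)}"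

definition excB :: "int set \<Rightarrow> (int \<Rightarrow> int) \<Rightarrow> nat" where
  "excB S w = card {a \<in> S. w a > a \<or> (a < 0 \<and> w a = a)}"

definition is_derangement :: "int set \<Rightarrow> (int \<Rightarrow> int) \<Rightarrow> bool" where
  "is_derangement S w \<longleftrightarrow> \<not> (\<exists>a\<in>S. a > 0 \<and> w a = a)"

definition derangementsB :: "nat \<Rightarrow> (int set \<times> (int \<Rightarrow> int)) set" where
  "derangementsB n = {(S, w) \<in> signed_perms n. is_derangement S w}"

definition dB :: "nat \<Rightarrow> real poly" where
  "dB n = (\<Sum>(S, w)\<in>derangementsB n. monom 1 (excB S w))"

definition fplus :: "nat \<Rightarrow> real poly" where
  "fplus n = (THE p. \<exists>q. dB n = p + q
       \<and> (\<forall>x::real. x \<noteq> 0 \<longrightarrow> poly p x = x ^ n * poly p (1 / x))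
       \<and> (\<forall>x::real. x \<noteq> 0 \<longrightarrow> poly q x = x ^ (n + 1) * poly q (1 / x)))"

definition fminus :: "nat \<Rightarrow> real poly" where
  "fminus n = (THE q. \<exists>p. dB n = p + q
       \<and> (\<forall>x::real. x \<noteq> 0 \<longrightarrow> poly p x = x ^ n * poly p (1 / x))
       \<and> (\<forall>x::real. x \<noteq> 0 \<longrightarrow> poly q x = x ^ (n + 1) * poly q (1 / x)))"

end

theory Submission
  imports Defs "HOL-Combinatorics.Permutations"
begin

text \<open>Remove the entry \<open>t = \<plusminus>n\<close> of largest absolute value from a signed derangement of
  \<open>[n]\<close>. If \<open>t = -n\<close> is a fixed point, what remains is a derangement of \<open>[n-1]\<close>; if \<open>t\<close>
  forms a 2-cycle with a positive \<open>j\<close>, removing both leaves a derangement of \<open>[n-1] - {j}\<close>;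
  otherwise \<open>t\<close> was inserted, with either sign, into a cycle of a derangement of \<open>[n-1]\<close>
  right after some entry \<open>a\<close>. Tracking the excedances through this bijection gives
  \<open>d(n, k+1) = 2(k+1) d(n-1, k+1) + (2n-2k-1) d(n-1, k) + 2(n-1) d(n-2, k)\<close>
  for the coefficients of \<open>d\<^sup>B\<close>. Now define \<open>a\<^sup>\<plusminus>\<close> by the recurrences of the theorem. By
  induction, \<open>a\<^sup>+\<^sub>n + a\<^sup>-\<^sub>n = d\<^sup>B\<^sub>n\<close>, and \<open>a\<^sup>+\<^sub>n\<close>, \<open>a\<^sup>-\<^sub>n\<close> are palindromic of degrees \<open>n\<close> and \<open>n+1\<close>.
  As no nonzero polynomial satisfies \<open>p(x) = x\<^sup>D p(1/x)\<close> for both \<open>D\<close> and \<open>D + 1\<close>,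
  they are \<open>f\<^sup>+\<^sub>n\<close> and \<open>f\<^sup>-\<^sub>n\<close>.\<close>

section \<open>Signed derangements on an arbitrary index set\<close>

definition signed_set_of :: "nat set \<Rightarrow> int set \<Rightarrow> bool" where
  "signed_set_of N S \<longleftrightarrow> inj_on abs S \<and> abs ` S = int ` N"

lemma signed_sets_eq: "signed_sets n = {S. signed_set_of {1..n} S}"
proof (intro set_eqI iffI)
  fix S assume "S \<in> signed_sets n"
  then obtain \<sigma> :: "nat \<Rightarrow> int" where \<sigma>: "\<forall>i\<in>{1..n}. \<sigma> i = 1 \<or> \<sigma> i = -1"
    and S: "S = (\<lambda>i. \<sigma> i * int i) ` {1..n}" unfolding signed_sets_def by blast
  have abs_\<sigma>: "\<bar>\<sigma> i * int i\<bar> = int i" if "i \<in> {1..n}" for i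
  proof -
    have "\<sigma> i = 1 \<or> \<sigma> i = -1" using \<sigma> that by blast
    then show ?thesis by (auto simp: abs_mult)
  qed
  have "signed_set_of {1..n} S"
    unfolding signed_set_of_def S inj_on_def image_image
    using abs_\<sigma> by (auto simp: image_iff)
  then show "S \<in> {S. signed_set_of {1..n} S}" by simp
next
  fix S assume "S \<in> {S. signed_set_of {1..n} S}"
  then have S: "signed_set_of {1..n} S" by simp
  define \<sigma> where "\<sigma> i = (if int i \<in> S then 1 else (-1::int))" for i
  have abs_image: "abs ` S = int ` {1..n}" and abs_inj: "\<And>a b. a \<in> S \<Longrightarrow> b \<in> S \<Longrightarrow> \<bar>a\<bar> = \<bar>b\<bar> \<Longrightarrow> a = b"
    using S unfolding signed_set_of_def inj_on_def by blast+
  have "S = (\<lambda>i. \<sigma> i * int i) ` {1..n}"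
  proof (intro set_eqI iffI)
    fix a
    assume a: "a \<in> S"
    then obtain i where i: "i \<in> {1..n}" "\<bar>a\<bar> = int i" using abs_image by blast
    have "a = \<sigma> i * int i"
      using a abs_inj[OF a, of "int i"] i by (auto simp: \<sigma>_def abs_if split: if_splits)
    then show "a \<in> (\<lambda>i. \<sigma> i * int i) ` {1..n}" using i by blast
  next
    fix a
    assume "a \<in> (\<lambda>i. \<sigma> i * int i) ` {1..n}"
    then obtain i where i: "i \<in> {1..n}" "a = \<sigma> i * int i" by blast
    obtain b where b: "b \<in> S" "\<bar>b\<bar> = int i" using abs_image i(1) by (metis imageE imageI)
    show "a \<in> S"
    proof (cases "int i \<in> S")
      case False
      then have "b = - int i" using b by (cases "b < 0") auto
      then show ?thesis using False i b by (simp add: \<sigma>_def)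
    qed (use i in \<open>simp add: \<sigma>_def\<close>)
  qed
  moreover have "\<forall>i\<in>{1..n}. \<sigma> i = 1 \<or> \<sigma> i = -1" by (simp add: \<sigma>_def)
  ultimately show "S \<in> signed_sets n" unfolding signed_sets_def by blast
qed

lemma signed_set_of_abs_mem: "signed_set_of N S \<Longrightarrow> a \<in> S \<Longrightarrow> \<bar>a\<bar> \<in> int ` N"
  unfolding signed_set_of_def by blast

lemma signed_set_of_abs_eq: "signed_set_of N S \<Longrightarrow> a \<in> S \<Longrightarrow> b \<in> S \<Longrightarrow> \<bar>a\<bar> = \<bar>b\<bar> \<Longrightarrow> a = b"
  unfolding signed_set_of_def inj_on_def by blast

lemma signed_set_of_notin: "signed_set_of M S \<Longrightarrow> \<bar>t\<bar> = int i \<Longrightarrow> i \<notin> M \<Longrightarrow> t \<notin> S"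
  using signed_set_of_abs_mem by fastforce

lemma signed_set_of_ex: "signed_set_of N S \<Longrightarrow> i \<in> N \<Longrightarrow> \<exists>t\<in>S. \<bar>t\<bar> = int i"
  unfolding signed_set_of_def by (metis imageE imageI)

lemma signed_set_of_insert:
  "signed_set_of N S \<Longrightarrow> \<bar>t\<bar> = int i \<Longrightarrow> i \<notin> N \<Longrightarrow> signed_set_of (insert i N) (insert t S)"
  unfolding signed_set_of_def by (auto simp: inj_on_insert) (metis image_iff of_nat_eq_iff)

lemma signed_set_of_remove:
  assumes "signed_set_of N S" "t \<in> S" "\<bar>t\<bar> = int i"
  shows "signed_set_of (N - {i}) (S - {t})"
proof -
  have "abs ` (S - {t}) = abs ` S - {\<bar>t\<bar>}"
    using assms(1,2) by (auto simp: signed_set_of_def inj_on_def)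
  then show ?thesis
    using assms unfolding signed_set_of_def by (auto intro: inj_on_subset)
qed

lemma signed_set_of_finite: "signed_set_of N S \<Longrightarrow> finite N \<Longrightarrow> finite S"
  unfolding signed_set_of_def by (metis finite_image_iff finite_imageI)

lemma signed_set_of_card: "signed_set_of N S \<Longrightarrow> card S = card N"
  unfolding signed_set_of_def by (metis card_image inj_on_of_nat)

text \<open>The index set is arbitrary because the recursion also deletes indices other than the
  largest one.\<close>

definition derangements_on :: "nat set \<Rightarrow> (int set \<times> (int \<Rightarrow> int)) set" where
  "derangements_on N = {(S, w). signed_set_of N S \<and> w permutes S \<and> (\<forall>a\<in>S. 0 < a \<longrightarrow> w a \<noteq> a)}"

lemma mem_derangements_on:
  "(S, w) \<in> derangements_on N \<longleftrightarrow> signed_set_of N S \<and> w permutes S \<and> (\<forall>a\<in>S. 0 < a \<longrightarrow> w a \<noteq> a)"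
  unfolding derangements_on_def by simp

lemma derangementsB_eq: "derangementsB n = derangements_on {1..n}"
  unfolding derangementsB_def signed_perms_def derangements_on_def signed_sets_eq is_derangement_def
  by (auto intro: bij_imp_permutes permutes_imp_bij permutes_not_in)

lemma finite_derangements_on:
  assumes "finite N"
  shows "finite (derangements_on N)"
proof -
  let ?U = "int ` N \<union> uminus ` int ` N"
  have "S \<subseteq> ?U" if "signed_set_of N S" for S
  proof
    fix a assume "a \<in> S"
    with that have "\<bar>a\<bar> \<in> int ` N" by (rule signed_set_of_abs_mem)
    then show "a \<in> ?U" by (cases "a < 0") (force simp: image_iff)+
  qed
  then have "derangements_on N \<subseteq> (SIGMA S:Pow ?U. {w. w permutes S})"
    unfolding derangements_on_def by auto
  moreover have "finite (SIGMA S:Pow ?U. {w. w permutes S})"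
    using assms by (intro finite_SigmaI finite_permutations) (auto intro: finite_subset)
  ultimately show ?thesis by (rule finite_subset)
qed

definition is_excedance :: "(int \<Rightarrow> int) \<Rightarrow> int \<Rightarrow> bool" where
  "is_excedance w a \<longleftrightarrow> a < w a \<or> (a < 0 \<and> w a = a)"

lemma excB_eq_sum: "finite S \<Longrightarrow> excB S w = (\<Sum>a\<in>S. if is_excedance w a then 1 else 0)"
  unfolding excB_def is_excedance_def using sum.inter_filter[of S "\<lambda>_. 1::nat"] by simp

definition exc_indicator :: "nat \<Rightarrow> int set \<times> (int \<Rightarrow> int) \<Rightarrow> real" where
  "exc_indicator k = (\<lambda>(S, w). if excB S w = k then 1 else 0)"

definition exc_count :: "nat set \<Rightarrow> nat \<Rightarrow> real" where
  "exc_count N k = (\<Sum>x\<in>derangements_on N. exc_indicator k x)"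

lemma coeff_dB: "coeff (dB n) k = exc_count {1..n} k"
  unfolding dB_def exc_count_def exc_indicator_def derangementsB_eq coeff_sum
  by (simp add: split_def)

lemma exc_count_empty: "exc_count {} k = (if k = 0 then 1 else 0)"
proof -
  have "derangements_on {} = {({}, id)}"
    unfolding derangements_on_def signed_set_of_def by auto
  then show ?thesis unfolding exc_count_def exc_indicator_def by (simp add: excB_def)
qed

lemma exc_count_eq_0_if_card_less:
  assumes "finite N" "card N < k"
  shows "exc_count N k = 0"
  unfolding exc_count_def exc_indicator_def
proof (intro sum.neutral ballI)
  fix x assume "x \<in> derangements_on N"
  moreover obtain S w where [simp]: "x = (S, w)" by fastforce
  ultimately have "signed_set_of N S" by (simp add: mem_derangements_on)
  then have "excB S w \<le> card S"
    unfolding excB_def using assms(1) signed_set_of_finite by (intro card_mono) auto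
  also have "\<dots> = card N" using \<open>signed_set_of N S\<close> by (rule signed_set_of_card)
  finally have "excB S w \<le> card N" .
  then show "(case x of (S, w) \<Rightarrow> if excB S w = k then 1 else 0) = (0::real)" using assms by auto
qed

section \<open>Removing the entry of largest absolute value\<close>

lemma abs_sign_mult: "s \<in> {1, -1} \<Longrightarrow> \<bar>s * int m\<bar> = int m"
  by (auto simp: abs_mult)

lemma sum_indicator_excB_shift:
  assumes "finite S"
  shows "(\<Sum>a\<in>S. if excB S w + (if is_excedance w a then 0 else 1) = Suc k then 1 else 0 :: real)
    = real (Suc k) * exc_indicator (Suc k) (S, w) + real (card S - k) * exc_indicator k (S, w)"
proof -
  define E where "E = {a \<in> S. is_excedance w a}"
  have card_E: "card E = excB S w" unfolding E_def excB_def is_excedance_def ..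
  have "(\<Sum>a\<in>S. if excB S w + (if is_excedance w a then 0 else 1) = Suc k then 1 else 0 :: real)
      = (\<Sum>a\<in>S. if is_excedance w a then exc_indicator (Suc k) (S, w) else exc_indicator k (S, w))"
    by (rule sum.cong) (auto simp: exc_indicator_def)
  also have "\<dots> = real (card E) * exc_indicator (Suc k) (S, w) + real (card (S - E)) * exc_indicator k (S, w)"
  proof -
    have "S \<inter> {a. is_excedance w a} = E" "S \<inter> - {a. is_excedance w a} = S - E"
      unfolding E_def by auto
    then show ?thesis unfolding sum.If_cases[OF assms] by simp
  qed
  also have "card (S - E) = card S - excB S w"
    using assms card_E by (simp add: E_def card_Diff_subset)
  finally show ?thesis by (auto simp: exc_indicator_def card_E)
qed

fun adjoin_fixed :: "nat \<Rightarrow> int set \<times> (int \<Rightarrow> int) \<Rightarrow> int set \<times> (int \<Rightarrow> int)" where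
  "adjoin_fixed m (S, w) = (insert (- int m) S, w)"

text \<open>As \<open>w \<circ> transpose a t\<close> maps \<open>a\<close> to \<open>t\<close> and \<open>t\<close> to \<open>w a\<close>, the new element \<open>t\<close>
  is inserted into the cycle of \<open>w\<close> right after \<open>a\<close>.\<close>

fun insert_after :: "nat \<Rightarrow> (int set \<times> (int \<Rightarrow> int)) \<times> int \<times> int \<Rightarrow> int set \<times> (int \<Rightarrow> int)" where
  "insert_after m ((S, w), a, s) = (insert (s * int m) S, w \<circ> transpose a (s * int m))"

fun adjoin_swap :: "nat \<Rightarrow> nat \<times> (int set \<times> (int \<Rightarrow> int)) \<times> int \<Rightarrow> int set \<times> (int \<Rightarrow> int)" where
  "adjoin_swap m (j, (T, v), s) =
     (insert (int j) (insert (s * int m) T), v \<circ> transpose (int j) (s * int m))"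

context
  fixes N :: "nat set" and m :: nat
  assumes finite_N: "finite N" and zero_notin_N: "0 \<notin> N"
    and max_in_N: "m \<in> N" and le_max: "\<forall>i\<in>N. i \<le> m"
begin

lemma max_pos: "0 < m"
  using zero_notin_N max_in_N by (cases m) auto

lemma insert_max_eq: "insert m (N - {m}) = N"
  using max_in_N by blast

lemma abs_less_max:
  assumes "signed_set_of (N - {m}) S" "a \<in> S"
  shows "\<bar>a\<bar> < int m"
proof -
  obtain i where "i \<in> N - {m}" "\<bar>a\<bar> = int i" using signed_set_of_abs_mem[OF assms] by blast
  then show ?thesis using le_max by (auto simp: le_less)
qed

definition insert_dom :: "((int set \<times> (int \<Rightarrow> int)) \<times> int \<times> int) set" where
  "insert_dom = (SIGMA x:derangements_on (N - {m}). fst x \<times> {1, -1})"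

definition swap_dom :: "(nat \<times> (int set \<times> (int \<Rightarrow> int)) \<times> int) set" where
  "swap_dom = (SIGMA j:N - {m}. derangements_on (N - {m} - {j}) \<times> {1, -1})"

lemma adjoin_fixed_mem:
  assumes "x \<in> derangements_on (N - {m})"
  shows "adjoin_fixed m x \<in> derangements_on N"
proof -
  obtain S w where x: "x = (S, w)" by fastforce
  have S: "signed_set_of (N - {m}) S" "w permutes S" "\<forall>a\<in>S. 0 < a \<longrightarrow> w a \<noteq> a"
    using assms unfolding x mem_derangements_on by auto
  have "signed_set_of N (insert (- int m) S)"
    using signed_set_of_insert[OF S(1), of "- int m" m] insert_max_eq by simp
  moreover have "w permutes insert (- int m) S" using S(2) by (rule permutes_subset) auto
  ultimately show ?thesis using S(3) unfolding x by (auto simp: mem_derangements_on)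
qed

lemma insert_after_mem:
  assumes "x \<in> insert_dom"
  shows "insert_after m x \<in> derangements_on N"
proof -
  obtain S w a s where x: "x = ((S, w), a, s)" and a: "a \<in> S" and s: "s \<in> {1, -1}"
    and S: "signed_set_of (N - {m}) S" "w permutes S" "\<forall>b\<in>S. 0 < b \<longrightarrow> w b \<noteq> b"
    using assms unfolding insert_dom_def by (cases x) (auto simp: mem_derangements_on)
  define t where "t = s * int m"
  have t: "\<bar>t\<bar> = int m" unfolding t_def using s by (rule abs_sign_mult)
  have t_notin: "t \<notin> S" using signed_set_of_notin[OF S(1) t] by simp
  have "w t = t" using permutes_not_in[OF S(2) t_notin] .
  moreover have "w a \<in> S" using permutes_in_image[OF S(2)] a by simp
  ultimately have no_fix: "(w \<circ> transpose a t) b \<noteq> b" if "b \<in> insert t S" "0 < b" for b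
    using that S(3) a t_notin by (cases "b = t"; cases "b = a") auto
  have "signed_set_of N (insert t S)"
    using signed_set_of_insert[OF S(1) t] insert_max_eq by simp
  moreover have "w permutes insert t S" using S(2) by (rule permutes_subset) auto
  then have "(w \<circ> transpose a t) permutes insert t S"
    using a by (intro permutes_compose[OF permutes_swap_id]) auto
  ultimately show ?thesis using no_fix unfolding x by (auto simp: mem_derangements_on t_def)
qed

lemma adjoin_swap_mem:
  assumes "x \<in> swap_dom"
  shows "adjoin_swap m x \<in> derangements_on N"
proof -
  obtain j T v s where x: "x = (j, (T, v), s)" and j: "j \<in> N - {m}" and s: "s \<in> {1, -1}"
    and T: "signed_set_of (N - {m} - {j}) T" "v permutes T" "\<forall>b\<in>T. 0 < b \<longrightarrow> v b \<noteq> b"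
    using assms unfolding swap_dom_def by (cases x) (auto simp: mem_derangements_on)
  define t where "t = s * int m"
  have t: "\<bar>t\<bar> = int m" unfolding t_def using s by (rule abs_sign_mult)
  have t_notin: "t \<notin> T" using signed_set_of_notin[OF T(1) t] by simp
  have j_notin: "int j \<notin> T" using signed_set_of_notin[OF T(1), of "int j" j] by simp
  have jt: "int j \<noteq> t" and j_pos: "0 < int j" using t j zero_notin_N by (auto intro: Nat.gr0I)
  have "v t = t" "v (int j) = int j" using permutes_not_in[OF T(2)] t_notin j_notin by auto
  then have no_fix: "(v \<circ> transpose (int j) t) b \<noteq> b" if "b \<in> insert (int j) (insert t T)" "0 < b" for b
    using that T(3) jt by (cases "b = t"; cases "b = int j") auto
  have "insert j (insert m (N - {m} - {j})) = N" using j max_in_N by auto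
  then have "signed_set_of N (insert (int j) (insert t T))"
    using signed_set_of_insert[OF signed_set_of_insert[OF T(1) t], of "int j" j] j by simp
  moreover have "v permutes insert (int j) (insert t T)" using T(2) by (rule permutes_subset) auto
  then have "(v \<circ> transpose (int j) t) permutes insert (int j) (insert t T)"
    by (intro permutes_compose[OF permutes_swap_id]) auto
  ultimately show ?thesis using no_fix unfolding x by (auto simp: mem_derangements_on t_def)
qed

text \<open>The three images are told apart by the entry \<open>t\<close> with \<open>\<bar>t\<bar> = m\<close>: it is a fixed point,
  it forms a 2-cycle with a positive entry, or neither.\<close>

lemma adjoin_fixed_max:
  assumes "x \<in> derangements_on (N - {m})" "adjoin_fixed m x = (S2, w2)"
  shows "- int m \<in> S2 \<and> w2 (- int m) = - int m"
proof -
  obtain S w where x: "x = (S, w)" by fastforce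
  have "signed_set_of (N - {m}) S" "w permutes S"
    using assms(1) unfolding x mem_derangements_on by auto
  moreover have "- int m \<notin> S" by (rule signed_set_of_notin[OF \<open>signed_set_of (N - {m}) S\<close>]) auto
  ultimately have "w (- int m) = - int m" by (simp add: permutes_not_in)
  then show ?thesis using assms(2) unfolding x by auto
qed

lemma insert_after_max:
  assumes "x \<in> insert_dom" "insert_after m x = (S2, w2)"
  shows "\<exists>t\<in>S2. \<bar>t\<bar> = int m \<and> w2 t \<noteq> t \<and> \<not> (0 < w2 t \<and> w2 (w2 t) = t)"
proof -
  obtain S w a s where x: "x = ((S, w), a, s)" and a: "a \<in> S" and s: "s \<in> {1, -1}"
    and S: "signed_set_of (N - {m}) S" "w permutes S" "\<forall>b\<in>S. 0 < b \<longrightarrow> w b \<noteq> b"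
    using assms(1) unfolding insert_dom_def by (cases x) (auto simp: mem_derangements_on)
  define t where "t = s * int m"
  have t: "\<bar>t\<bar> = int m" unfolding t_def using s by (rule abs_sign_mult)
  have t_notin: "t \<notin> S" using signed_set_of_notin[OF S(1) t] by simp
  have wa: "w a \<in> S" and wwa: "w (w a) \<in> S" using permutes_in_image[OF S(2)] a by auto
  have w2: "S2 = insert t S" "w2 = w \<circ> transpose a t" using assms(2) unfolding x t_def by auto
  have "w2 t = w a" "w2 t \<noteq> t" using w2 wa t_notin by auto
  moreover have "w2 (w a) \<noteq> t" if "0 < w a"
  proof -
    have "w a \<noteq> a" using S(3) a that by fastforce
    moreover have "w a \<noteq> t" using wa t_notin by blast
    ultimately have "w2 (w a) = w (w a)" unfolding w2 by simp
    then show ?thesis using wwa t_notin by auto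
  qed
  ultimately show ?thesis using t w2(1) by auto
qed

lemma adjoin_swap_max:
  assumes "x \<in> swap_dom" "adjoin_swap m x = (S2, w2)"
  shows "\<exists>t\<in>S2. \<bar>t\<bar> = int m \<and> 0 < w2 t \<and> w2 (w2 t) = t"
proof -
  obtain j T v s where x: "x = (j, (T, v), s)" and j: "j \<in> N - {m}" and s: "s \<in> {1, -1}"
    and T: "signed_set_of (N - {m} - {j}) T" "v permutes T"
    using assms(1) unfolding swap_dom_def by (cases x) (auto simp: mem_derangements_on)
  define t where "t = s * int m"
  have t: "\<bar>t\<bar> = int m" unfolding t_def using s by (rule abs_sign_mult)
  have "v t = t" "v (int j) = int j"
    using permutes_not_in[OF T(2)] signed_set_of_notin[OF T(1)] t by auto
  moreover have w2: "S2 = insert (int j) (insert t T)" "w2 = v \<circ> transpose (int j) t"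
    using assms(2) unfolding x t_def by auto
  ultimately have "w2 t = int j" "w2 (int j) = t" by auto
  moreover have "0 < j" using j zero_notin_N by (cases j) auto
  ultimately show ?thesis using t w2(1) by auto
qed

lemma derangements_on_max_unique:
  assumes "(S2, w2) \<in> derangements_on N" "t \<in> S2" "t' \<in> S2" "\<bar>t\<bar> = int m" "\<bar>t'\<bar> = int m"
  shows "t = t'"
  using assms signed_set_of_abs_eq by (auto simp: mem_derangements_on)

lemma disjoint_fixed_insert:
  "adjoin_fixed m ` derangements_on (N - {m}) \<inter> insert_after m ` insert_dom = {}"
proof (intro equals0I)
  fix y assume "y \<in> adjoin_fixed m ` derangements_on (N - {m}) \<inter> insert_after m ` insert_dom"
  then obtain x x' where x: "x \<in> derangements_on (N - {m})" "x' \<in> insert_dom"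
    and y: "y = adjoin_fixed m x" "y = insert_after m x'" by blast
  obtain S2 w2 where y_eq: "adjoin_fixed m x = (S2, w2)" "insert_after m x' = (S2, w2)"
    using y by (metis surj_pair)
  have "(S2, w2) \<in> derangements_on N" using adjoin_fixed_mem[OF x(1)] y_eq by simp
  moreover have "- int m \<in> S2" "w2 (- int m) = - int m"
    using adjoin_fixed_max[OF x(1) y_eq(1)] by auto
  moreover obtain t where "t \<in> S2" "\<bar>t\<bar> = int m" "w2 t \<noteq> t"
    using insert_after_max[OF x(2) y_eq(2)] by auto
  ultimately show False using derangements_on_max_unique[of S2 w2 t "- int m"] by auto
qed

lemma disjoint_fixed_swap:
  "adjoin_fixed m ` derangements_on (N - {m}) \<inter> adjoin_swap m ` swap_dom = {}"
proof (intro equals0I)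
  fix y assume "y \<in> adjoin_fixed m ` derangements_on (N - {m}) \<inter> adjoin_swap m ` swap_dom"
  then obtain x x' where x: "x \<in> derangements_on (N - {m})" "x' \<in> swap_dom"
    and y: "y = adjoin_fixed m x" "y = adjoin_swap m x'" by blast
  obtain S2 w2 where y_eq: "adjoin_fixed m x = (S2, w2)" "adjoin_swap m x' = (S2, w2)"
    using y by (metis surj_pair)
  have "(S2, w2) \<in> derangements_on N" using adjoin_fixed_mem[OF x(1)] y_eq by simp
  moreover have "- int m \<in> S2" "w2 (- int m) = - int m"
    using adjoin_fixed_max[OF x(1) y_eq(1)] by auto
  moreover obtain t where "t \<in> S2" "\<bar>t\<bar> = int m" "0 < w2 t"
    using adjoin_swap_max[OF x(2) y_eq(2)] by auto
  ultimately show False using derangements_on_max_unique[of S2 w2 t "- int m"] by auto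
qed

lemma disjoint_insert_swap:
  "insert_after m ` insert_dom \<inter> adjoin_swap m ` swap_dom = {}"
proof (intro equals0I)
  fix y assume "y \<in> insert_after m ` insert_dom \<inter> adjoin_swap m ` swap_dom"
  then obtain x x' where x: "x \<in> insert_dom" "x' \<in> swap_dom"
    and y: "y = insert_after m x" "y = adjoin_swap m x'" by blast
  obtain S2 w2 where y_eq: "insert_after m x = (S2, w2)" "adjoin_swap m x' = (S2, w2)"
    using y by (metis surj_pair)
  have "(S2, w2) \<in> derangements_on N" using insert_after_mem[OF x(1)] y_eq by simp
  moreover obtain t where "t \<in> S2" "\<bar>t\<bar> = int m" "\<not> (0 < w2 t \<and> w2 (w2 t) = t)"
    using insert_after_max[OF x(1) y_eq(1)] by auto
  moreover obtain t' where "t' \<in> S2" "\<bar>t'\<bar> = int m" "0 < w2 t'" "w2 (w2 t') = t'"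
    using adjoin_swap_max[OF x(2) y_eq(2)] by auto
  ultimately show False using derangements_on_max_unique[of S2 w2 t t'] by auto
qed

lemma fixed_max_in_image:
  assumes y: "(S2, w2) \<in> derangements_on N" and t: "t \<in> S2" "\<bar>t\<bar> = int m" "w2 t = t"
  shows "(S2, w2) \<in> adjoin_fixed m ` derangements_on (N - {m})"
proof -
  have S2: "signed_set_of N S2" "w2 permutes S2" "\<forall>a\<in>S2. 0 < a \<longrightarrow> w2 a \<noteq> a"
    using y by (simp_all add: mem_derangements_on)
  have "\<not> 0 < t" using S2(3) t(1,3) by blast
  then have t_eq: "t = - int m" using t(2) by linarith
  have "w2 permutes S2 - {t}" using S2(2) t(3) by (auto intro: permutes_superset)
  then have "(S2 - {t}, w2) \<in> derangements_on (N - {m})"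
    using signed_set_of_remove[OF S2(1) t(1,2)] S2(3) by (auto simp: mem_derangements_on)
  moreover have "(S2, w2) = adjoin_fixed m (S2 - {t}, w2)" using t(1) t_eq by auto
  ultimately show ?thesis by (rule rev_image_eqI)
qed

lemma swap_max_in_image:
  assumes y: "(S2, w2) \<in> derangements_on N"
    and t: "t \<in> S2" "\<bar>t\<bar> = int m" "0 < w2 t" "w2 (w2 t) = t"
  shows "(S2, w2) \<in> adjoin_swap m ` swap_dom"
proof -
  have S2: "signed_set_of N S2" "w2 permutes S2" "\<forall>a\<in>S2. 0 < a \<longrightarrow> w2 a \<noteq> a"
    using y by (simp_all add: mem_derangements_on)
  define j where "j = nat (w2 t)"
  have wt: "w2 t = int j" using t(3) unfolding j_def by simp
  have j_in: "int j \<in> S2" using permutes_in_image[OF S2(2)] t(1) wt by metis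
  have jt: "int j \<noteq> t" using S2(3) t wt by force
  have "j \<in> N - {m}"
    using signed_set_of_abs_mem[OF S2(1) j_in] signed_set_of_abs_eq[OF S2(1) j_in t(1)] jt t(2)
    by auto
  define s :: int where "s = (if 0 < t then 1 else -1)"
  have s: "s \<in> {1, -1}" and t_eq: "t = s * int m" unfolding s_def using t(2) by auto
  define T where "T = S2 - {t} - {int j}"
  define v where "v = w2 \<circ> transpose (int j) t"
  have "signed_set_of (N - {m} - {j}) T"
    unfolding T_def using signed_set_of_remove[OF signed_set_of_remove[OF S2(1) t(1,2)]] j_in jt
    by simp
  moreover have "v permutes T"
  proof -
    have "v permutes S2" unfolding v_def using S2(2) j_in t(1) by (intro permutes_compose permutes_swap_id)
    moreover have "v (int j) = int j" "v t = t" using wt t(4) unfolding v_def by auto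
    ultimately show ?thesis unfolding T_def by (auto intro: permutes_superset)
  qed
  moreover have "\<forall>a\<in>T. 0 < a \<longrightarrow> v a \<noteq> a" using S2(3) unfolding T_def v_def by auto
  ultimately have "(j, (T, v), s) \<in> swap_dom"
    using \<open>j \<in> N - {m}\<close> s unfolding swap_dom_def by (simp add: mem_derangements_on)
  moreover have "(S2, w2) = adjoin_swap m (j, (T, v), s)"
    using t(1) j_in t_eq unfolding T_def v_def by (auto simp: comp_assoc)
  ultimately show ?thesis by (rule rev_image_eqI)
qed

lemma insert_max_in_image:
  assumes y: "(S2, w2) \<in> derangements_on N"
    and t: "t \<in> S2" "\<bar>t\<bar> = int m" "w2 t \<noteq> t" "\<not> (0 < w2 t \<and> w2 (w2 t) = t)"
  shows "(S2, w2) \<in> insert_after m ` insert_dom"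
proof -
  have S2: "signed_set_of N S2" "w2 permutes S2" "\<forall>a\<in>S2. 0 < a \<longrightarrow> w2 a \<noteq> a"
    using y by (simp_all add: mem_derangements_on)
  obtain a where a: "a \<in> S2" "w2 a = t"
    using permutes_image[OF S2(2)] t(1) by (metis imageE)
  have at: "a \<noteq> t" using a t(3) by auto
  define s :: int where "s = (if 0 < t then 1 else -1)"
  have s: "s \<in> {1, -1}" and t_eq: "t = s * int m" unfolding s_def using t(2) by auto
  define S where "S = S2 - {t}"
  define w where "w = w2 \<circ> transpose a t"
  have "signed_set_of (N - {m}) S" unfolding S_def using signed_set_of_remove[OF S2(1) t(1,2)] .
  moreover have "w permutes S"
  proof -
    have "w permutes S2" unfolding w_def using S2(2) a(1) t(1) by (intro permutes_compose permutes_swap_id)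
    moreover have "w t = t" using a(2) unfolding w_def by simp
    ultimately show ?thesis unfolding S_def by (auto intro: permutes_superset)
  qed
  moreover have "w b \<noteq> b" if "b \<in> S" "0 < b" for b
  proof (cases "b = a")
    case True
    then show ?thesis using t(4) a that unfolding w_def by auto
  next
    case False
    then show ?thesis using S2(3) that unfolding S_def w_def by auto
  qed
  ultimately have "((S, w), a, s) \<in> insert_dom"
    using a(1) at s unfolding insert_dom_def S_def by (simp add: mem_derangements_on)
  moreover have "(S2, w2) = insert_after m ((S, w), a, s)"
    using t(1) t_eq unfolding S_def w_def by (auto simp: comp_assoc)
  ultimately show ?thesis by (rule rev_image_eqI)
qed

lemma derangements_on_decomp:
  "derangements_on N = adjoin_fixed m ` derangements_on (N - {m})
     \<union> insert_after m ` insert_dom \<union> adjoin_swap m ` swap_dom"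
proof (intro equalityI subsetI)
  fix y assume y: "y \<in> derangements_on N"
  obtain S2 w2 where y_eq: "y = (S2, w2)" by fastforce
  have "signed_set_of N S2" using y unfolding y_eq by (simp add: mem_derangements_on)
  then obtain t where t: "t \<in> S2" "\<bar>t\<bar> = int m" using signed_set_of_ex max_in_N by blast
  show "y \<in> adjoin_fixed m ` derangements_on (N - {m})
     \<union> insert_after m ` insert_dom \<union> adjoin_swap m ` swap_dom"
    using fixed_max_in_image[OF _ t] swap_max_in_image[OF _ t] insert_max_in_image[OF _ t] y
    unfolding y_eq by blast
next
  fix y assume "y \<in> adjoin_fixed m ` derangements_on (N - {m})
     \<union> insert_after m ` insert_dom \<union> adjoin_swap m ` swap_dom"
  then show "y \<in> derangements_on N" using adjoin_fixed_mem insert_after_mem adjoin_swap_mem by blast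
qed

lemma inj_on_adjoin_fixed: "inj_on (adjoin_fixed m) (derangements_on (N - {m}))"
proof (rule inj_onI)
  fix x x' assume x: "x \<in> derangements_on (N - {m})" "x' \<in> derangements_on (N - {m})"
    and eq: "adjoin_fixed m x = adjoin_fixed m x'"
  obtain S w S' w' where xx: "x = (S, w)" "x' = (S', w')" by fastforce
  have "- int m \<notin> S" "- int m \<notin> S'"
    using x signed_set_of_notin[of "N - {m}" _ "- int m" m] unfolding xx
    by (auto simp: mem_derangements_on)
  then show "x = x'" using eq unfolding xx by (simp add: insert_ident)
qed

lemma inj_on_insert_after: "inj_on (insert_after m) insert_dom"
proof (rule inj_onI)
  fix x x' assume "x \<in> insert_dom" "x' \<in> insert_dom" and eq: "insert_after m x = insert_after m x'"
  then obtain S w a s S' w' a' s' where xx: "x = ((S, w), a, s)" "x' = ((S', w'), a', s')"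
    and a: "a \<in> S" and s: "s \<in> {1, -1}" and s': "s' \<in> {1, -1}"
    and S: "signed_set_of (N - {m}) S" "w permutes S"
    and S': "signed_set_of (N - {m}) S'" "w' permutes S'"
    unfolding insert_dom_def by (cases x, cases x') (auto simp: mem_derangements_on)
  define t where "t = s * int m"
  have t: "\<bar>t\<bar> = int m" unfolding t_def using s by (rule abs_sign_mult)
  have t_notin: "t \<notin> S" "t \<notin> S'" using signed_set_of_notin[OF S(1) t] signed_set_of_notin[OF S'(1) t] by auto
  have ins: "insert t S = insert (s' * int m) S'"
    and comp: "w \<circ> transpose a t = w' \<circ> transpose a' (s' * int m)"
    using eq unfolding xx t_def by auto
  then have "t = s' * int m" using t_notin(2) by blast
  then have ss: "s = s'" using max_pos unfolding t_def by simp
  have SS: "S = S'" using ins t_notin unfolding ss t_def by (simp add: insert_ident)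
  have aa: "a = a'"
  proof (rule ccontr)
    assume "a \<noteq> a'"
    moreover have "a \<noteq> t" using a t_notin(1) by blast
    ultimately have "(w' \<circ> transpose a' t) a = w' a" by simp
    moreover have "w' a \<in> S'" using permutes_in_image[OF S'(2)] a SS by simp
    moreover have "(w \<circ> transpose a t) a = t" using permutes_not_in[OF S(2) t_notin(1)] by simp
    ultimately show False using comp t_notin(2) unfolding ss t_def by simp
  qed
  have "w = w'" using arg_cong[OF comp, of "\<lambda>f. f \<circ> transpose a t"] unfolding aa ss t_def
    by (simp add: comp_assoc)
  then show "x = x'" unfolding xx using SS aa ss by simp
qed

lemma inj_on_adjoin_swap: "inj_on (adjoin_swap m) swap_dom"
proof (rule inj_onI)
  fix x x' assume "x \<in> swap_dom" "x' \<in> swap_dom" and eq: "adjoin_swap m x = adjoin_swap m x'"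
  then obtain j T v s j' T' v' s' where xx: "x = (j, (T, v), s)" "x' = (j', (T', v'), s')"
    and j: "j \<in> N - {m}" "j' \<in> N - {m}" and s: "s \<in> {1, -1}" "s' \<in> {1, -1}"
    and T: "signed_set_of (N - {m} - {j}) T" "v permutes T"
    and T': "signed_set_of (N - {m} - {j'}) T'" "v' permutes T'"
    unfolding swap_dom_def by (cases x, cases x') (auto simp: mem_derangements_on)
  define t where "t = s * int m"
  have t: "\<bar>t\<bar> = int m" unfolding t_def using s(1) by (rule abs_sign_mult)
  have notin: "t \<notin> T" "t \<notin> T'" "int j \<notin> T" "int j' \<notin> T'"
    using signed_set_of_notin[OF T(1)] signed_set_of_notin[OF T'(1)] t by auto
  have jt: "int j \<noteq> t" "int j' \<noteq> t" using j t by auto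
  have ins: "insert (int j) (insert t T) = insert (int j') (insert (s' * int m) T')"
    and comp: "v \<circ> transpose (int j) t = v' \<circ> transpose (int j') (s' * int m)"
    using eq unfolding xx t_def by auto
  then have "t \<in> insert (int j') (insert (s' * int m) T')" by blast
  then have "t = s' * int m" using notin(2) jt(2) by blast
  then have ss: "s = s'" using max_pos unfolding t_def by simp
  have "(v \<circ> transpose (int j) t) t = int j" "(v' \<circ> transpose (int j') t) t = int j'"
    using permutes_not_in[OF T(2) notin(3)] permutes_not_in[OF T'(2) notin(4)] by auto
  then have jj: "j = j'" using comp unfolding ss t_def by simp
  have TT: "T = T'" using ins notin jt unfolding jj ss t_def by (simp add: insert_ident)
  have "v = v'" using arg_cong[OF comp, of "\<lambda>f. f \<circ> transpose (int j) t"] unfolding jj ss t_def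
    by (simp add: comp_assoc)
  then show "x = x'" unfolding xx using TT jj ss by simp
qed

lemma finite_insert_dom: "finite insert_dom"
  unfolding insert_dom_def using finite_N
  by (intro finite_SigmaI finite_derangements_on)
     (auto simp: mem_derangements_on intro: signed_set_of_finite)

lemma finite_swap_dom: "finite swap_dom"
  unfolding swap_dom_def using finite_N by (intro finite_SigmaI finite_derangements_on) auto

lemma sum_derangements_on_decomp:
  "(\<Sum>y\<in>derangements_on N. g y) = (\<Sum>x\<in>derangements_on (N - {m}). g (adjoin_fixed m x))
     + (\<Sum>x\<in>insert_dom. g (insert_after m x)) + (\<Sum>x\<in>swap_dom. g (adjoin_swap m x))"
proof -
  have fin: "finite (derangements_on (N - {m}))" using finite_N by (simp add: finite_derangements_on)
  have "(\<Sum>y\<in>derangements_on N. g y) = sum g (adjoin_fixed m ` derangements_on (N - {m}))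
     + sum g (insert_after m ` insert_dom) + sum g (adjoin_swap m ` swap_dom)"
    unfolding derangements_on_decomp
    using fin finite_insert_dom finite_swap_dom
      disjoint_fixed_insert disjoint_fixed_swap disjoint_insert_swap
    by (subst sum.union_disjoint; auto)+
  then show ?thesis
    by (simp add: sum.reindex inj_on_adjoin_fixed inj_on_insert_after inj_on_adjoin_swap)
qed

lemma excB_adjoin_fixed:
  assumes "(S, w) \<in> derangements_on (N - {m})"
  shows "excB (insert (- int m) S) w = Suc (excB S w)"
proof -
  have S: "signed_set_of (N - {m}) S" "w permutes S" using assms by (auto simp: mem_derangements_on)
  have fin: "finite S" using signed_set_of_finite[OF S(1)] finite_N by simp
  have notin: "- int m \<notin> S" using signed_set_of_notin[OF S(1), of "- int m" m] by simp
  then have "is_excedance w (- int m)"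
    using permutes_not_in[OF S(2)] max_pos unfolding is_excedance_def by simp
  then show ?thesis using fin notin by (simp add: excB_eq_sum)
qed

text \<open>Since \<open>\<bar>t\<bar> = m\<close> exceeds all other absolute values, exactly one of the steps
  \<open>a \<mapsto> t\<close>, \<open>t \<mapsto> w a\<close> is an excedance; the step \<open>a \<mapsto> w a\<close> that they replace is lost.\<close>

lemma excB_insert_after:
  assumes "((S, w), a, s) \<in> insert_dom"
  shows "excB (insert (s * int m) S) (w \<circ> transpose a (s * int m))
    = excB S w + (if is_excedance w a then 0 else 1)"
proof -
  have a: "a \<in> S" and s: "s \<in> {1, -1}"
    and S: "signed_set_of (N - {m}) S" "w permutes S"
    using assms unfolding insert_dom_def by (auto simp: mem_derangements_on)
  define t where "t = s * int m"
  define w2 where "w2 = w \<circ> transpose a t"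
  define F where "F f x = (if is_excedance f x then 1 else (0::nat))" for f x
  have t: "\<bar>t\<bar> = int m" unfolding t_def using s by (rule abs_sign_mult)
  have fin: "finite S" using signed_set_of_finite[OF S(1)] finite_N by simp
  have t_notin: "t \<notin> S" using signed_set_of_notin[OF S(1) t] by simp
  have wa: "w a \<in> S" using permutes_in_image[OF S(2)] a by simp
  have "\<bar>a\<bar> < int m" "\<bar>w a\<bar> < int m" using abs_less_max[OF S(1)] a wa by blast+
  moreover have "w2 a = t" "w2 t = w a" unfolding w2_def using permutes_not_in[OF S(2) t_notin] by auto
  ultimately have one: "F w2 t + F w2 a = 1"
    using t unfolding F_def is_excedance_def by (cases "0 < t") auto
  have same: "F w2 x = F w x" if "x \<in> S - {a}" for x
    using that t_notin unfolding F_def w2_def is_excedance_def by (cases "x = t") auto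
  have "(\<Sum>x\<in>insert t S. F w2 x) = F w2 t + F w2 a + (\<Sum>x\<in>S - {a}. F w2 x)"
    using fin t_notin a by (simp add: sum.remove)
  also have "(\<Sum>x\<in>S - {a}. F w2 x) = (\<Sum>x\<in>S - {a}. F w x)" using same by (rule sum.cong[OF refl])
  also have "\<dots> = (\<Sum>x\<in>S. F w x) - F w a" using fin a by (simp add: sum.remove)
  finally have "(\<Sum>x\<in>insert t S. F w2 x) = (\<Sum>x\<in>S. F w x) + 1 - F w a"
    using one fin a by (simp add: sum.remove)
  moreover have "finite (insert t S)" using fin by simp
  ultimately show ?thesis
    unfolding excB_eq_sum[OF fin] excB_eq_sum[OF \<open>finite (insert t S)\<close>] t_def[symmetric]
      w2_def[symmetric]
    by (simp add: F_def)
qed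

lemma excB_adjoin_swap:
  assumes "(j, (T, v), s) \<in> swap_dom"
  shows "excB (insert (int j) (insert (s * int m) T)) (v \<circ> transpose (int j) (s * int m))
    = Suc (excB T v)"
proof -
  have j: "j \<in> N - {m}" and s: "s \<in> {1, -1}"
    and T: "signed_set_of (N - {m} - {j}) T" "v permutes T"
    using assms unfolding swap_dom_def by (auto simp: mem_derangements_on)
  define t where "t = s * int m"
  define v2 where "v2 = v \<circ> transpose (int j) t"
  define F where "F f x = (if is_excedance f x then 1 else (0::nat))" for f x
  have t: "\<bar>t\<bar> = int m" unfolding t_def using s by (rule abs_sign_mult)
  have fin: "finite T" using signed_set_of_finite[OF T(1)] finite_N by simp
  have notin: "t \<notin> T" "int j \<notin> T" using signed_set_of_notin[OF T(1)] t by auto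
  have jt: "int j \<noteq> t" and j_pos: "0 < j" using j t zero_notin_N by (auto intro: Nat.gr0I)
  have "v2 (int j) = t" "v2 t = int j"
    unfolding v2_def using permutes_not_in[OF T(2)] notin by auto
  then have one: "F v2 (int j) + F v2 t = 1"
    using jt j_pos unfolding F_def is_excedance_def by auto
  have same: "F v2 x = F v x" if "x \<in> T" for x
    using that notin unfolding F_def v2_def is_excedance_def by (cases "x = t"; cases "x = int j") auto
  have "(\<Sum>x\<in>insert (int j) (insert t T). F v2 x) = F v2 (int j) + F v2 t + (\<Sum>x\<in>T. F v2 x)"
    using fin notin jt by simp
  also have "(\<Sum>x\<in>T. F v2 x) = (\<Sum>x\<in>T. F v x)" using same by (rule sum.cong[OF refl])
  finally have "(\<Sum>x\<in>insert (int j) (insert t T). F v2 x) = Suc (\<Sum>x\<in>T. F v x)" using one by simp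
  moreover have "finite (insert (int j) (insert t T))" using fin by simp
  ultimately show ?thesis
    unfolding excB_eq_sum[OF fin] excB_eq_sum[OF \<open>finite (insert (int j) (insert t T))\<close>]
      t_def[symmetric] v2_def[symmetric]
    by (simp add: F_def)
qed

lemma exc_indicator_adjoin_fixed:
  "x \<in> derangements_on (N - {m}) \<Longrightarrow> exc_indicator (Suc k) (adjoin_fixed m x) = exc_indicator k x"
  by (cases x) (simp add: exc_indicator_def excB_adjoin_fixed)

lemma exc_indicator_insert_after:
  "((S, w), a, s) \<in> insert_dom \<Longrightarrow> exc_indicator (Suc k) (insert_after m ((S, w), a, s))
    = (if excB S w + (if is_excedance w a then 0 else 1) = Suc k then 1 else 0)"
  using excB_insert_after by (simp add: exc_indicator_def)

lemma exc_indicator_adjoin_swap: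
  "(j, y, s) \<in> swap_dom \<Longrightarrow> exc_indicator (Suc k) (adjoin_swap m (j, y, s)) = exc_indicator k y"
  using excB_adjoin_swap by (cases y) (simp add: exc_indicator_def)

lemma sum_fixed_part:
  "(\<Sum>x\<in>derangements_on (N - {m}). exc_indicator (Suc k) (adjoin_fixed m x)) = exc_count (N - {m}) k"
  unfolding exc_count_def by (intro sum.cong refl exc_indicator_adjoin_fixed)

lemma sum_insert_part:
  "(\<Sum>x\<in>insert_dom. exc_indicator (Suc k) (insert_after m x))
    = 2 * (real (Suc k) * exc_count (N - {m}) (Suc k) + real (card (N - {m}) - k) * exc_count (N - {m}) k)"
proof -
  let ?D = "derangements_on (N - {m})"
  have fin: "finite ?D" using finite_N by (simp add: finite_derangements_on)
  have fin_S: "finite S" and card_S: "card S = card (N - {m})" if "(S, w) \<in> ?D" for S w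
    using that finite_N signed_set_of_finite signed_set_of_card by (auto simp: mem_derangements_on)
  have fibre: "(\<Sum>z\<in>S \<times> {1, -1}. exc_indicator (Suc k) (insert_after m ((S, w), z)))
      = 2 * (real (Suc k) * exc_indicator (Suc k) (S, w) + real (card (N - {m}) - k) * exc_indicator k (S, w))"
    if y: "(S, w) \<in> ?D" for S w
  proof -
    have "(\<Sum>z\<in>S \<times> {1, -1}. exc_indicator (Suc k) (insert_after m ((S, w), z)))
        = (\<Sum>a\<in>S. \<Sum>s\<in>{1, -1::int}. if excB S w + (if is_excedance w a then 0 else 1) = Suc k then 1 else 0)"
      unfolding sum.cartesian_product'
      by (intro sum.cong refl exc_indicator_insert_after) (use y in \<open>simp add: insert_dom_def\<close>)
    also have "\<dots> = 2 * (\<Sum>a\<in>S. if excB S w + (if is_excedance w a then 0 else 1) = Suc k then 1 else 0)"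
      by (simp add: sum_distrib_left)
    finally show ?thesis using sum_indicator_excB_shift[OF fin_S[OF y]] card_S[OF y] by simp
  qed
  have "(\<Sum>x\<in>insert_dom. exc_indicator (Suc k) (insert_after m x))
      = (\<Sum>y\<in>?D. \<Sum>z\<in>fst y \<times> {1, -1}. exc_indicator (Suc k) (insert_after m (y, z)))"
    unfolding insert_dom_def using fin fin_S by (subst sum.Sigma) (auto simp: split_def)
  also have "\<dots> = (\<Sum>y\<in>?D. 2 * (real (Suc k) * exc_indicator (Suc k) y
      + real (card (N - {m}) - k) * exc_indicator k y))"
    using fibre by (intro sum.cong refl) auto
  finally show ?thesis
    by (simp add: exc_count_def sum.distrib sum_distrib_left)
qed

lemma sum_swap_part:
  "(\<Sum>x\<in>swap_dom. exc_indicator (Suc k) (adjoin_swap m x))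
    = 2 * (\<Sum>j\<in>N - {m}. exc_count (N - {m} - {j}) k)"
proof -
  have fin: "finite (derangements_on (N - {m} - {j}) \<times> {1, -1::int})" for j
    using finite_N by (simp add: finite_derangements_on)
  have fibre: "(\<Sum>z\<in>derangements_on (N - {m} - {j}) \<times> {1, -1}. exc_indicator (Suc k) (adjoin_swap m (j, z)))
      = 2 * exc_count (N - {m} - {j}) k" if j: "j \<in> N - {m}" for j
  proof -
    have "(\<Sum>z\<in>derangements_on (N - {m} - {j}) \<times> {1, -1}. exc_indicator (Suc k) (adjoin_swap m (j, z)))
        = (\<Sum>y\<in>derangements_on (N - {m} - {j}). \<Sum>s\<in>{1, -1::int}. exc_indicator k y)"
      unfolding sum.cartesian_product'
      by (intro sum.cong refl exc_indicator_adjoin_swap) (use j in \<open>simp add: swap_dom_def\<close>)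
    then show ?thesis by (simp add: exc_count_def sum_distrib_left)
  qed
  have "(\<Sum>x\<in>swap_dom. exc_indicator (Suc k) (adjoin_swap m x))
      = (\<Sum>j\<in>N - {m}. \<Sum>z\<in>derangements_on (N - {m} - {j}) \<times> {1, -1}.
           exc_indicator (Suc k) (adjoin_swap m (j, z)))"
    unfolding swap_dom_def using finite_N fin by (subst sum.Sigma) (auto simp: split_def)
  also have "\<dots> = (\<Sum>j\<in>N - {m}. 2 * exc_count (N - {m} - {j}) k)"
    using fibre by (intro sum.cong refl) auto
  finally show ?thesis by (simp add: sum_distrib_left)
qed

lemma exc_count_Suc:
  "exc_count N (Suc k) = exc_count (N - {m}) k
     + 2 * (real (Suc k) * exc_count (N - {m}) (Suc k) + real (card (N - {m}) - k) * exc_count (N - {m}) k)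
     + 2 * (\<Sum>j\<in>N - {m}. exc_count (N - {m} - {j}) k)"
  unfolding exc_count_def[of N] sum_derangements_on_decomp sum_fixed_part sum_insert_part sum_swap_part ..

lemma exc_count_zero: "exc_count N 0 = 0"
  unfolding exc_count_def
proof (intro sum.neutral ballI)
  fix y assume "y \<in> derangements_on N"
  then consider (fixed) x where "x \<in> derangements_on (N - {m})" "y = adjoin_fixed m x"
    | (insert) x where "x \<in> insert_dom" "y = insert_after m x"
    | (swap) x where "x \<in> swap_dom" "y = adjoin_swap m x"
    unfolding derangements_on_decomp by blast
  then show "exc_indicator 0 y = 0"
  proof cases
    case fixed
    then show ?thesis by (cases x) (simp add: exc_indicator_def excB_adjoin_fixed)
  next
    case insert
    then obtain S w a s where x: "x = ((S, w), a, s)" and a: "a \<in> S"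
      and S: "(S, w) \<in> derangements_on (N - {m})"
      unfolding insert_dom_def by (cases x) auto
    have "finite S" using S finite_N signed_set_of_finite by (auto simp: mem_derangements_on)
    then have "0 < excB S w" if "is_excedance w a"
      using a that unfolding excB_def is_excedance_def by (auto simp: card_gt_0_iff)
    then show ?thesis
      using excB_insert_after[OF insert(1)[unfolded x]] insert(2) unfolding x
      by (auto simp: exc_indicator_def)
  next
    case swap
    then obtain j T v s where x: "x = (j, (T, v), s)" by (metis prod.exhaust)
    then show ?thesis
      using excB_adjoin_swap[OF swap(1)[unfolded x]] swap(2) by (simp add: exc_indicator_def)
  qed
qed

end

section \<open>The recurrence for \<open>d\<^sup>B\<^sub>n\<close>\<close>

lemma exc_count_Max_zero:
  assumes "finite N" "0 \<notin> N" "N \<noteq> {}"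
  shows "exc_count N 0 = 0"
  using exc_count_zero[OF assms(1,2) Max_in[OF assms(1,3)]] assms(1) by simp

lemma exc_count_Suc_by_card:
  assumes M: "finite M" "0 \<notin> M" "M \<noteq> {}"
    and IH: "\<And>A k. finite A \<Longrightarrow> 0 \<notin> A \<Longrightarrow> card A < card M \<Longrightarrow> exc_count A k = exc_count {1..card A} k"
  defines "n \<equiv> card M"
  shows "exc_count M (Suc k) = exc_count {1..n - 1} k
    + 2 * (real (Suc k) * exc_count {1..n - 1} (Suc k) + real (n - 1 - k) * exc_count {1..n - 1} k)
    + 2 * (real (n - 1) * exc_count {1..n - 2} k)"
proof -
  define m where "m = Max M"
  have m: "m \<in> M" "\<forall>i\<in>M. i \<le> m" unfolding m_def using M by auto
  have "0 < n" using M unfolding n_def by auto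
  have card_M': "card (M - {m}) = n - 1" using M m unfolding n_def by simp
  have IH1: "exc_count (M - {m}) k' = exc_count {1..n - 1} k'" for k'
    using IH[of "M - {m}" k'] M(1,2) card_M' \<open>0 < n\<close> unfolding n_def by simp
  have IH2: "exc_count (M - {m} - {j}) k = exc_count {1..n - 2} k" if "j \<in> M - {m}" for j
  proof -
    have "card (M - {m} - {j}) = n - 2" using that M(1) card_M' by simp
    then show ?thesis using IH[of "M - {m} - {j}" k] M(1,2) \<open>0 < n\<close> unfolding n_def by simp
  qed
  have "(\<Sum>j\<in>M - {m}. exc_count (M - {m} - {j}) k) = real (n - 1) * exc_count {1..n - 2} k"
    using IH2 card_M' by simp
  then show ?thesis
    unfolding exc_count_Suc[OF M(1,2) m, of k] IH1 card_M' by simp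
qed

text \<open>The number of signed derangements of \<open>N\<close> with \<open>k\<close> excedances depends only on
  \<open>card N\<close>: the recurrence determines it from smaller index sets of the same sizes.\<close>

lemma exc_count_eq_exc_count_card:
  assumes "finite N" "0 \<notin> N"
  shows "exc_count N k = exc_count {1..card N} k"
  using assms
proof (induction "card N" arbitrary: N k rule: less_induct)
  case less
  show ?case
  proof (cases "N = {}")
    case False
    then have "{1..card N} \<noteq> {}" using less.prems by (simp add: Suc_le_eq card_gt_0_iff)
    show ?thesis
    proof (cases k)
      case 0
      then show ?thesis
        using exc_count_Max_zero[OF less.prems False] exc_count_Max_zero[of "{1..card N}"]
          \<open>{1..card N} \<noteq> {}\<close> by simp
    next
      case (Suc k')
      have IH: "exc_count A k = exc_count {1..card A} k"
        if "finite A" "0 \<notin> A" "card A < card {1..card N}" for A k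
        by (rule less.hyps) (use that in simp_all)
      have "exc_count {1..card N} (Suc k') = exc_count N (Suc k')"
        using exc_count_Suc_by_card[of "{1..card N}" k', OF _ _ \<open>{1..card N} \<noteq> {}\<close> IH]
          exc_count_Suc_by_card[OF less.prems False IH[unfolded card_atLeastAtMost]]
        by simp
      then show ?thesis unfolding Suc ..
    qed
  qed (simp add: exc_count_empty)
qed

lemma coeff_dB_0: "coeff (dB 0) k = (if k = 0 then 1 else 0)"
  by (simp add: coeff_dB exc_count_empty)

lemma coeff_dB_eq_0_if_less: "n < k \<Longrightarrow> coeff (dB n) k = 0"
  by (simp add: coeff_dB exc_count_eq_0_if_card_less)

lemma coeff_dB_zero: "0 < n \<Longrightarrow> coeff (dB n) 0 = 0"
  unfolding coeff_dB by (rule exc_count_Max_zero) auto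

lemma coeff_dB_Suc:
  assumes "0 < n"
  shows "coeff (dB n) (Suc k) = 2 * real (Suc k) * coeff (dB (n - 1)) (Suc k)
    + (2 * real n - 2 * real k - 1) * coeff (dB (n - 1)) k + 2 * real (n - 1) * coeff (dB (n - 2)) k"
proof -
  have N': "{1..n} - {n} = {1..n - 1}" using assms by auto
  have "exc_count ({1..n - 1} - {j}) k = coeff (dB (n - 2)) k" if "j \<in> {1..n - 1}" for j
    using exc_count_eq_exc_count_card[of "{1..n - 1} - {j}" k] that
    by (simp add: coeff_dB numeral_2_eq_2)
  then have "(\<Sum>j\<in>{1..n - 1}. exc_count ({1..n - 1} - {j}) k) = real (n - 1) * coeff (dB (n - 2)) k"
    by simp
  moreover have "real (n - 1 - k) * coeff (dB (n - 1)) k = (real n - 1 - real k) * coeff (dB (n - 1)) k"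
    using coeff_dB_eq_0_if_less[of "n - 1" k] assms by (cases "k \<le> n - 1") (auto simp: of_nat_diff)
  moreover have "finite {1..n}" "0 \<notin> {1..n}" "n \<in> {1..n}" "\<forall>i\<in>{1..n}. i \<le> n"
    using assms by auto
  note rec = exc_count_Suc[OF this, of k, unfolded N']
  ultimately show ?thesis unfolding coeff_dB rec by (simp add: algebra_simps)
qed

lemma coeff_dB_1: "coeff (dB (Suc 0)) k = (if k = 1 then 1 else 0)"
  by (cases k) (simp_all add: coeff_dB_zero coeff_dB_Suc coeff_dB_0)

section \<open>The palindromic decomposition\<close>

definition palindromic_seq :: "nat \<Rightarrow> (nat \<Rightarrow> 'a::zero) \<Rightarrow> bool" where
  "palindromic_seq D c \<longleftrightarrow> (\<forall>k>D. c k = 0) \<and> (\<forall>k\<le>D. c k = c (D - k))"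

lemma palindromic_seq_eq: "palindromic_seq D c \<Longrightarrow> i + j = D \<Longrightarrow> c i = c j"
  unfolding palindromic_seq_def by (metis add_diff_cancel_left' le_add1)

lemma palindromic_seqI:
  assumes "\<And>k. D \<le> k \<Longrightarrow> c k = 0" "c 0 = 0" "\<And>k. 0 < k \<Longrightarrow> k < D \<Longrightarrow> c k = c (D - k)"
  shows "palindromic_seq D c"
  unfolding palindromic_seq_def
proof (intro conjI allI impI)
  fix k assume "k \<le> D"
  then consider "k = 0" | "k = D" | "0 < k" "k < D" by linarith
  then show "c k = c (D - k)"
  proof cases
    case 3
    then show ?thesis by (rule assms(3))
  qed (simp_all add: assms(1,2))
qed (simp add: assms(1))

lemma palindromic_seq_vanish: "palindromic_seq D c \<Longrightarrow> D < k \<Longrightarrow> c k = 0"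
  unfolding palindromic_seq_def by blast

definition palindromic :: "nat \<Rightarrow> 'a::field poly \<Rightarrow> bool" where
  "palindromic D p \<longleftrightarrow> (\<forall>x. x \<noteq> 0 \<longrightarrow> poly p x = x ^ D * poly p (1 / x))"

lemma palindromic_diff:
  assumes "palindromic D p" "palindromic D q"
  shows "palindromic D (p - q)"
  unfolding palindromic_def
proof (intro allI impI)
  fix x :: 'a assume "x \<noteq> 0"
  then have "poly p x = x ^ D * poly p (1 / x)" "poly q x = x ^ D * poly q (1 / x)"
    using assms unfolding palindromic_def by blast+
  then show "poly (p - q) x = x ^ D * poly (p - q) (1 / x)"
    by (simp only: poly_diff right_diff_distrib)
qed

lemma palindromic_Suc_eq_0:
  fixes p :: "'a::field_char_0 poly"
  assumes p: "palindromic D p" "palindromic (Suc D) p"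
  shows "p = 0"
proof (rule ccontr)
  assume "p \<noteq> 0"
  have "poly p y = 0" if "y \<noteq> 0" "y \<noteq> 1" for y :: 'a
  proof -
    define x where "x = 1 / y"
    have x: "x \<noteq> 0" "x \<noteq> 1" "1 / x = y" unfolding x_def using that by (auto simp: field_simps)
    have "poly p x = x ^ D * poly p (1 / x)" "poly p x = x ^ Suc D * poly p (1 / x)"
      using p x(1) unfolding palindromic_def by blast+
    then have "x ^ D * poly p y = x ^ D * x * poly p y" unfolding x(3) by (simp add: ac_simps)
    then have "x ^ D * (1 - x) * poly p y = 0" by (simp add: right_diff_distrib) blast
    then show ?thesis using x by simp
  qed
  then have "UNIV - {0, 1} \<subseteq> {y :: 'a. poly p y = 0}" by blast
  then have "finite (UNIV - {0, 1 :: 'a})"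
    using poly_roots_finite[OF \<open>p \<noteq> 0\<close>] by (rule finite_subset)
  then show False using infinite_UNIV_char_0[where 'a = 'a] by simp
qed

lemma coeff_sum_monom: "(\<forall>k>D. c k = 0) \<Longrightarrow> coeff (\<Sum>i\<le>D. monom (c i) i) k = c k"
  by (cases "k \<le> D") (simp_all add: coeff_sum)

lemma palindromic_sum_monom:
  fixes c :: "nat \<Rightarrow> 'a::field"
  assumes "palindromic_seq D c"
  shows "palindromic D (\<Sum>i\<le>D. monom (c i) i)"
  unfolding palindromic_def
proof (intro allI impI)
  fix x :: 'a assume x: "x \<noteq> 0"
  have "x ^ D * poly (\<Sum>i\<le>D. monom (c i) i) (1 / x) = (\<Sum>i\<le>D. c i * x ^ (D - i))"
    unfolding poly_sum poly_monom sum_distrib_left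
  proof (rule sum.cong[OF refl])
    fix i assume "i \<in> {..D}"
    then have "x ^ D = x ^ (D - i) * x ^ i" by (simp add: power_add[symmetric])
    then show "x ^ D * (c i * (1 / x) ^ i) = c i * x ^ (D - i)" using x by (simp add: power_one_over)
  qed
  also have "\<dots> = (\<Sum>i\<le>D. c (D - i) * x ^ i)"
    by (subst sum.atLeastAtMost_rev[of _ 0 D, simplified atLeast0AtMost]) simp
  also have "\<dots> = poly (\<Sum>i\<le>D. monom (c i) i) x"
    unfolding poly_sum poly_monom
    using palindromic_seq_eq[OF assms] by (intro sum.cong refl) simp
  finally show "poly (\<Sum>i\<le>D. monom (c i) i) x = x ^ D * poly (\<Sum>i\<le>D. monom (c i) i) (1 / x)" ..
qed

lemma fplus_fminus_eqI:
  assumes "dB n = p + q" "palindromic n p" "palindromic (n + 1) q"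
  shows "fplus n = p \<and> fminus n = q"
proof -
  have unique: "p' = p \<and> q' = q"
    if "dB n = p' + q'" "palindromic n p'" "palindromic (n + 1) q'" for p' q'
  proof -
    have "p' - p = q - q'" using assms(1) that(1) by (simp add: algebra_simps)
    moreover have "palindromic n (p' - p)" using that(2) assms(2) by (rule palindromic_diff)
    moreover have "palindromic (Suc n) (q - q')" using palindromic_diff[OF assms(3) that(3)] by simp
    ultimately have "p' - p = 0" by (metis palindromic_Suc_eq_0)
    then show ?thesis using assms(1) that(1) by simp
  qed
  have "fplus n = p"
    unfolding fplus_def palindromic_def[symmetric]
  proof (rule the_equality)
    fix p' assume "\<exists>q'. dB n = p' + q' \<and> palindromic n p' \<and> palindromic (n + 1) q'"
    then show "p' = p" using unique by blast
  qed (use assms in blast)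
  moreover have "fminus n = q"
    unfolding fminus_def palindromic_def[symmetric]
  proof (rule the_equality)
    fix q' assume "\<exists>p'. dB n = p' + q' \<and> palindromic n p' \<and> palindromic (n + 1) q'"
    then show "q' = q" using unique by blast
  qed (use assms in blast)
  ultimately show ?thesis ..
qed

text \<open>The recurrences of the theorem, taken as definitions of the coefficient sequences; the
  initial values are the coefficients of \<open>f\<^sup>+\<^sub>0 = d\<^sup>B\<^sub>0 = 1\<close> and \<open>f\<^sup>-\<^sub>1 = d\<^sup>B\<^sub>1 = x\<close>.\<close>

fun aplus :: "nat \<Rightarrow> nat \<Rightarrow> real" where
  "aplus 0 k = (if k = 0 then 1 else 0)"
| "aplus (Suc 0) k = 0"
| "aplus (Suc (Suc n)) k = (if k = 0 then 0 else
       (2 * real k - 1) * aplus (Suc n) k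
     + 2 * (real (Suc (Suc n)) - real k) * aplus (Suc n) (k - 1)
     + 2 * (real (Suc (Suc n)) - 1) * aplus n (k - 1) + coeff (dB (Suc n)) k)"

fun aminus :: "nat \<Rightarrow> nat \<Rightarrow> real" where
  "aminus 0 k = 0"
| "aminus (Suc 0) k = (if k = 1 then 1 else 0)"
| "aminus (Suc (Suc n)) k = (if k = 0 then 0 else
       (2 * real k - 1) * aminus (Suc n) k
     + 2 * (real (Suc (Suc n)) - real k) * aminus (Suc n) (k - 1)
     + 2 * (real (Suc (Suc n)) - 1) * aminus n (k - 1) + coeff (dB (Suc n)) (k - 1))"

lemma aplus_add_aminus: "aplus n k + aminus n k = coeff (dB n) k"
proof (induction n arbitrary: k rule: induct_nat_012)
  case 0
  then show ?case by (simp add: coeff_dB_0)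
next
  case 1
  then show ?case by (simp add: coeff_dB_1)
next
  case (ge2 n)
  show ?case
  proof (cases k)
    case 0
    then show ?thesis by (simp add: coeff_dB_zero)
  next
    case (Suc k')
    have "aplus (Suc (Suc n)) k + aminus (Suc (Suc n)) k
        = (2 * real k - 1) * coeff (dB (Suc n)) k + 2 * (real (Suc (Suc n)) - real k) * coeff (dB (Suc n)) k'
          + 2 * (real (Suc (Suc n)) - 1) * coeff (dB n) k' + coeff (dB (Suc n)) k + coeff (dB (Suc n)) k'"
      unfolding Suc by (simp add: ge2.IH[symmetric] algebra_simps)
    also have "\<dots> = coeff (dB (Suc (Suc n))) k"
      unfolding Suc coeff_dB_Suc[of "Suc (Suc n)" k', simplified] by (simp add: algebra_simps)
    finally show ?thesis .
  qed
qed

lemma palindromic_aplus_Suc_Suc: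
  assumes A: "palindromic_seq (Suc n) (aplus (Suc n))" and B: "palindromic_seq n (aplus n)"
    and C: "palindromic_seq (Suc (Suc n)) (aminus (Suc n))"
  shows "palindromic_seq (Suc (Suc n)) (aplus (Suc (Suc n)))"
proof -
  define N where "N = Suc (Suc n)"
  define a b c d where "a = aplus (Suc n)" and "b = aplus n" and "c = aminus (Suc n)"
    and "d = coeff (dB (Suc n))"
  have d: "d k = a k + c k" for k unfolding a_def c_def d_def by (simp add: aplus_add_aminus)
  have rec: "aplus N k = (2 * real k - 1) * a k + 2 * (real N - real k) * a (k - 1)
      + 2 * (real N - 1) * b (k - 1) + d k" if "0 < k" for k
    using that unfolding N_def a_def b_def d_def by simp
  have vanish: "aplus N k = 0" if "N \<le> k" for k
  proof -
    have "a k = 0" "b (k - 1) = 0" "d k = 0"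
      using that palindromic_seq_vanish[OF A] palindromic_seq_vanish[OF B] coeff_dB_eq_0_if_less
      unfolding N_def a_def b_def d_def by auto
    moreover have "2 * (real N - real k) * a (k - 1) = 0"
      using that palindromic_seq_vanish[OF A, of "k - 1"] unfolding a_def
      by (cases "k = N") (auto simp: N_def)
    moreover have "0 < k" using that unfolding N_def by simp
    ultimately show ?thesis using rec[of k] by simp
  qed
  have sym: "aplus N k = aplus N (N - k)" if k: "0 < k" "k < N" for k
  proof -
    define k' where "k' = N - k"
    have k': "0 < k'" "real k' = real N - real k" unfolding k'_def using k by auto
    have "a k' = a (k - 1)" "a (k' - 1) = a k"
      by (rule palindromic_seq_eq[OF A[folded a_def]]; use k in \<open>simp add: k'_def N_def\<close>)+
    moreover have "b (k' - 1) = b (k - 1)"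
      by (rule palindromic_seq_eq[OF B[folded b_def]]) (use k in \<open>simp add: k'_def N_def\<close>)
    moreover have "c k' = c k"
      by (rule palindromic_seq_eq[OF C[folded c_def]]) (use k in \<open>simp add: k'_def N_def\<close>)
    ultimately show ?thesis
      unfolding k'_def[symmetric] rec[OF k(1)] rec[OF k'(1)] d k'(2) by (simp add: algebra_simps)
  qed
  have "aplus N 0 = 0" unfolding N_def by simp
  then show ?thesis unfolding N_def[symmetric] using vanish sym by (intro palindromic_seqI)
qed

lemma aminus_zero: "aminus n 0 = 0"
  by (induction n rule: induct_nat_012) simp_all

lemma palindromic_aminus_Suc_Suc:
  assumes A: "palindromic_seq (Suc n) (aplus (Suc n))"
    and C: "palindromic_seq (Suc (Suc n)) (aminus (Suc n))" and E: "palindromic_seq (Suc n) (aminus n)"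
  shows "palindromic_seq (Suc (Suc (Suc n))) (aminus (Suc (Suc n)))"
proof -
  define N where "N = Suc (Suc n)"
  define a c e d where "a = aplus (Suc n)" and "c = aminus (Suc n)" and "e = aminus n"
    and "d = coeff (dB (Suc n))"
  have d: "d k = a k + c k" for k unfolding a_def c_def d_def by (simp add: aplus_add_aminus)
  have rec: "aminus N k = (2 * real k - 1) * c k + 2 * (real N - real k) * c (k - 1)
      + 2 * (real N - 1) * e (k - 1) + d (k - 1)" if "0 < k" for k
    using that unfolding N_def c_def e_def d_def by simp
  have vanish: "aminus N k = 0" if "Suc N \<le> k" for k
  proof -
    have "c k = 0" "e (k - 1) = 0" "d (k - 1) = 0"
      using that palindromic_seq_vanish[OF C] palindromic_seq_vanish[OF E] coeff_dB_eq_0_if_less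
      unfolding N_def c_def e_def d_def by auto
    moreover have "c (k - 1) = 0"
    proof (cases "k - 1 = N")
      case True
      then show ?thesis
        using palindromic_seq_eq[OF C[folded c_def], where i = N and j = 0] aminus_zero unfolding N_def c_def by simp
    next
      case False
      then show ?thesis using that palindromic_seq_vanish[OF C[folded c_def]] unfolding N_def by simp
    qed
    moreover have "0 < k" using that by simp
    ultimately show ?thesis using rec[of k] by simp
  qed
  have sym: "aminus N k = aminus N (Suc N - k)" if k: "0 < k" "k < Suc N" for k
  proof -
    define k' where "k' = Suc N - k"
    have k': "0 < k'" "real k' = real N + 1 - real k" unfolding k'_def using k by auto
    have "c k' = c (k - 1)" "c (k' - 1) = c k"
      by (rule palindromic_seq_eq[OF C[folded c_def]]; use k in \<open>simp add: k'_def N_def\<close>)+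
    moreover have "e (k' - 1) = e (k - 1)"
      by (rule palindromic_seq_eq[OF E[folded e_def]]) (use k in \<open>simp add: k'_def N_def\<close>)
    moreover have "a (k' - 1) = a (k - 1)"
      by (rule palindromic_seq_eq[OF A[folded a_def]]) (use k in \<open>simp add: k'_def N_def\<close>)
    ultimately show ?thesis
      unfolding k'_def[symmetric] rec[OF k(1)] rec[OF k'(1)] d k'(2) by (simp add: algebra_simps)
  qed
  show ?thesis unfolding N_def[symmetric] using vanish aminus_zero sym by (intro palindromic_seqI)
qed

lemma palindromic_aplus_aminus:
  "palindromic_seq n (aplus n) \<and> palindromic_seq (Suc n) (aminus n)"
proof (induction n rule: induct_nat_012)
  case 0
  then show ?case by (simp add: palindromic_seq_def)
next
  case 1
  then show ?case unfolding palindromic_seq_def by (auto simp: le_Suc_eq)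
next
  case (ge2 n)
  then have "palindromic_seq (Suc (Suc n)) (aplus (Suc (Suc n)))"
    by (intro palindromic_aplus_Suc_Suc) simp_all
  moreover have "palindromic_seq (Suc (Suc (Suc n))) (aminus (Suc (Suc n)))"
    using ge2 by (intro palindromic_aminus_Suc_Suc) simp_all
  ultimately show ?case ..
qed

lemma coeff_sum_monom_aplus: "coeff (\<Sum>i\<le>n. monom (aplus n i) i) k = aplus n k"
  and coeff_sum_monom_aminus: "coeff (\<Sum>i\<le>Suc n. monom (aminus n i) i) k = aminus n k"
  using palindromic_aplus_aminus[of n] coeff_sum_monom unfolding palindromic_seq_def by blast+

lemma fplus_fminus_eq:
  "fplus n = (\<Sum>i\<le>n. monom (aplus n i) i) \<and> fminus n = (\<Sum>i\<le>Suc n. monom (aminus n i) i)"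
proof (rule fplus_fminus_eqI)
  show "dB n = (\<Sum>i\<le>n. monom (aplus n i) i) + (\<Sum>i\<le>Suc n. monom (aminus n i) i)"
    by (rule poly_eqI) (simp only: coeff_add coeff_sum_monom_aplus coeff_sum_monom_aminus aplus_add_aminus)
  show "palindromic n (\<Sum>i\<le>n. monom (aplus n i) i)"
    using palindromic_aplus_aminus by (blast intro: palindromic_sum_monom)
  have "palindromic (Suc n) (\<Sum>i\<le>Suc n. monom (aminus n i) i)"
    using palindromic_aplus_aminus by (blast intro: palindromic_sum_monom)
  then show "palindromic (n + 1) (\<Sum>i\<le>Suc n. monom (aminus n i) i)" by simp
qed

lemma coeff_fplus: "coeff (fplus n) k = aplus n k"
  and coeff_fminus: "coeff (fminus n) k = aminus n k"
  using fplus_fminus_eq[of n] by (simp_all only: coeff_sum_monom_aplus coeff_sum_monom_aminus)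

theorem corollary7p9:
  fixes n k :: nat
  assumes "n \<ge> 2" and "k \<ge> 1"
  shows "(coeff (fplus n) k =
           (2 * real k - 1) * coeff (fplus (n - 1)) k
         + 2 * (real n - real k) * coeff (fplus (n - 1)) (k - 1)
         + 2 * (real n - 1) * coeff (fplus (n - 2)) (k - 1)
         + coeff (dB (n - 1)) k)
       \<and> (coeff (fminus n) k =
           (2 * real k - 1) * coeff (fminus (n - 1)) k
         + 2 * (real n - real k) * coeff (fminus (n - 1)) (k - 1)
         + 2 * (real n - 1) * coeff (fminus (n - 2)) (k - 1)
         + coeff (dB (n - 1)) (k - 1))"
proof -
  obtain n' where n: "n = Suc (Suc n')" using assms(1) by (metis add_2_eq_Suc le_Suc_ex)
  show ?thesis
    unfolding coeff_fplus coeff_fminus n using assms(2)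
    by (simp del: aplus.simps aminus.simps add: aplus.simps(3) aminus.simps(3))
qed

end
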